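(* $\Delta_0$ is the union of the good simplices.
   Context: Let $k\ge2$, $n=2k-1$, $e_1,\dots,e_k$ the standard basis of $\mathbb R^k$, $r_{(k)}=(r,\dots,r)\in\mathbb R^k$. In $\mathbb R^{2k}$ set $A_j=(e_j,0_{(k)})$, $B_j=\frac1{2n}(2_{(k)}-e_j,2_{(k)}-e_j)$, $C_j=(0_{(k)},e_j)$ for $j=1,\dots,k$; $A,B,C$ the corresponding $k$-element sets and $X=A\cup B\cup C$. $\langle\cdot\rangle$ denotes convex hull. $\Delta_0=\langle A\cup C\rangle$ is the standard simplex. A $2k$-element subset $S\subset X$ is good if it contains no set $\{A_j,B_j,C_j\}$ and $S\ne A\cup C$; a good simplex is $\langle S\rangle$ for a good set $S$. *)

theory Defs
  imports "HOL-Analysis.Analysis"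
begin

text \<open>Points of R^(2k) are represented as pairs in (real^'n) x (real^'n), k = CARD('n).
  The first component is the first k coordinates, the second the last k coordinates.\<close>

definition ptA :: "'n::finite \<Rightarrow> (real^'n) \<times> (real^'n)" where
  "ptA j = (axis j 1, 0)"

definition ptC :: "'n::finite \<Rightarrow> (real^'n) \<times> (real^'n)" where
  "ptC j = (0, axis j 1)"

definition ptB :: "'n::finite \<Rightarrow> (real^'n) \<times> (real^'n)" where
  "ptB j = (let n = 2 * real CARD('n) - 1;
                v = (\<chi> i. 2) - axis j 1
            in (1 / (2 * n)) *\<^sub>R (v, v))"

definition setA :: "((real^'n::finite) \<times> (real^'n)) set" where
  "setA = range ptA"

definition setB :: "((real^'n::finite) \<times> (real^'n)) set" where
  "setB = range ptB"

definition setC :: "((real^'n::finite) \<times> (real^'n)) set" where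
  "setC = range ptC"

definition setX :: "((real^'n::finite) \<times> (real^'n)) set" where
  "setX = setA \<union> setB \<union> setC"

definition good_set :: "((real^'n::finite) \<times> (real^'n)) set \<Rightarrow> bool" where
  "good_set S \<longleftrightarrow> S \<subseteq> setX \<and> card S = 2 * CARD('n)
     \<and> (\<forall>j. \<not> {ptA j, ptB j, ptC j} \<subseteq> S)
     \<and> S \<noteq> setA \<union> setC"

end

theory Submission
  imports Defs
begin

(* Every point of X has nonnegative coordinates summing to 1, so all good simplices lie in
   Delta_0. Conversely, write (a, c) in Delta_0 as sum_j (alpha_j A_j + t_j B_j + gamma_j C_j).
   Both halves of sum_j t_j B_j have i-th coordinate m_i = (2 T - t_i) / (2 n) with T = sum_j t_j,
   so alpha = a - m and gamma = c - m. With d = min a c, take t_j = max 0 (2 (T - n d_j)), where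
   the level T solves T = sum_j t_j (intermediate value theorem, T >= n min d). Then
   m_j = min d_j (T / n), so every triple {A_j, B_j, C_j} carries a zero weight, and at a minimiser
   of d that weight is alpha_j or gamma_j. Removing one zero-weight point from each triple leaves
   a good set whose simplex contains (a, c). *)

lemma two_card_minus_one_pos: "0 < 2 * real CARD('n::finite) - 1"
proof -
  have "1 \<le> real CARD('n)"
    by (simp add: Suc_le_eq)
  then show ?thesis
    by linarith
qed

lemma ptA_components [simp]:
  "fst (ptA j :: (real^'n::finite) \<times> (real^'n)) $ i = (if i = j then 1 else 0)"
  "snd (ptA j :: (real^'n::finite) \<times> (real^'n)) = 0"
  by (simp_all add: ptA_def axis_def)

lemma ptC_components [simp]:
  "fst (ptC j :: (real^'n::finite) \<times> (real^'n)) = 0"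
  "snd (ptC j :: (real^'n::finite) \<times> (real^'n)) $ i = (if i = j then 1 else 0)"
  by (simp_all add: ptC_def axis_def)

lemma ptB_components [simp]:
  "fst (ptB j :: (real^'n::finite) \<times> (real^'n)) $ i
     = (if i = j then 1 else 2) / (2 * (2 * real CARD('n) - 1))"
  "snd (ptB j :: (real^'n::finite) \<times> (real^'n)) $ i
     = (if i = j then 1 else 2) / (2 * (2 * real CARD('n) - 1))"
  by (simp_all add: ptB_def Let_def axis_def)

lemma ptA_eq_ptA_iff [simp]: "ptA i = (ptA j :: (real^'n::finite) \<times> (real^'n)) \<longleftrightarrow> i = j"
  by (simp add: ptA_def axis_eq_axis)

lemma ptC_eq_ptC_iff [simp]: "ptC i = (ptC j :: (real^'n::finite) \<times> (real^'n)) \<longleftrightarrow> i = j"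
  by (simp add: ptC_def axis_eq_axis)

lemma ptB_eq_ptB_iff [simp]: "ptB i = (ptB j :: (real^'n::finite) \<times> (real^'n)) \<longleftrightarrow> i = j"
proof
  assume "ptB i = (ptB j :: (real^'n::finite) \<times> (real^'n))"
  then have "fst (ptB i :: (real^'n) \<times> (real^'n)) $ i = fst (ptB j :: (real^'n) \<times> (real^'n)) $ i"
    by simp
  then show "i = j"
    using two_card_minus_one_pos[where 'n='n] by (auto split: if_splits)
qed simp

lemma ptA_neq_ptB [simp]: "ptA i \<noteq> (ptB j :: (real^'n::finite) \<times> (real^'n))"
proof
  assume "ptA i = (ptB j :: (real^'n::finite) \<times> (real^'n))"
  then have "snd (ptB j :: (real^'n::finite) \<times> (real^'n)) $ i = 0"
    by (metis ptA_components(2) zero_index)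
  then show False
    using two_card_minus_one_pos[where 'n='n] by (simp split: if_splits)
qed

lemma ptC_neq_ptB [simp]: "ptC i \<noteq> (ptB j :: (real^'n::finite) \<times> (real^'n))"
proof
  assume "ptC i = (ptB j :: (real^'n::finite) \<times> (real^'n))"
  then have "fst (ptB j :: (real^'n::finite) \<times> (real^'n)) $ i = 0"
    by (metis ptC_components(1) zero_index)
  then show False
    using two_card_minus_one_pos[where 'n='n] by (simp split: if_splits)
qed

lemma ptA_neq_ptC [simp]: "ptA i \<noteq> (ptC j :: (real^'n::finite) \<times> (real^'n))"
  by (simp add: ptA_def ptC_def)

lemmas ptB_neq_ptA [simp] = ptA_neq_ptB[symmetric]
lemmas ptB_neq_ptC [simp] = ptC_neq_ptB[symmetric]
lemmas ptC_neq_ptA [simp] = ptA_neq_ptC[symmetric]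

lemma triples_disjoint:
  assumes "x \<in> {ptA i, ptB i, ptC i}" "x \<in> {ptA j, ptB j, ptC j :: (real^'n::finite) \<times> (real^'n)}"
  shows "i = j"
  using assms by auto

lemma triple_subset_setX: "{ptA j, ptB j, ptC j} \<subseteq> setX"
  by (auto simp: setX_def setA_def setB_def setC_def)

lemma notin_range_transversal:
  assumes "\<And>i. om i \<in> {ptA i, ptB i, ptC i}" "x \<in> {ptA j, ptB j, ptC j}" "x \<noteq> om j"
  shows "x \<notin> range om"
proof
  assume "x \<in> range om"
  then obtain i where "x = om i"
    by blast
  moreover have "i = j"
    using assms(1)[of i] assms(2) \<open>x = om i\<close> by (intro triples_disjoint[of x]) simp_all
  ultimately show False
    using assms(3) by simp
qed

lemma sum_setX:
  "(\<Sum>x\<in>setX. f x) = (\<Sum>j\<in>UNIV. f (ptA j) + f (ptB j) + f (ptC (j :: 'n::finite)))"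
proof -
  have "(\<Sum>x\<in>setX. f x) = (\<Sum>x\<in>setA. f x) + (\<Sum>x\<in>setB. f x) + (\<Sum>x\<in>setC. f x)"
    unfolding setX_def setA_def setB_def setC_def
    by (subst sum.union_disjoint; auto)+
  also have "\<dots> = (\<Sum>j\<in>UNIV. f (ptA j)) + (\<Sum>j\<in>UNIV. f (ptB j)) + (\<Sum>j\<in>UNIV. f (ptC j))"
    unfolding setA_def setB_def setC_def by (subst (1 2 3) sum.reindex) (auto intro: inj_onI)
  finally show ?thesis
    by (simp add: sum.distrib)
qed

lemma card_setX: "card (setX :: ((real^'n::finite) \<times> (real^'n)) set) = 3 * CARD('n)"
  unfolding card_eq_sum sum_setX[of "\<lambda>_. 1 :: nat"] by simp

lemma good_set_Diff_transversal:
  fixes om :: "'n::finite \<Rightarrow> (real^'n) \<times> (real^'n)"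
  assumes om: "\<And>j. om j \<in> {ptA j, ptB j, ptC j}" and j0: "om j0 \<noteq> ptB j0"
  shows "good_set (setX - range om)"
  unfolding good_set_def
proof (intro conjI allI)
  have om_X: "range om \<subseteq> setX"
    using om triple_subset_setX by blast
  have "inj om"
  proof (rule injI)
    fix i j
    assume "om i = om j"
    then show "i = j"
      using om[of i] om[of j] by (intro triples_disjoint[of "om i"]) simp_all
  qed
  then show "card (setX - range om) = 2 * CARD('n)"
    using om_X by (simp add: card_Diff_subset card_image card_setX)
  show "\<not> {ptA j, ptB j, ptC j} \<subseteq> setX - range om" for j
    using om[of j] by blast
  have "ptB j0 \<in> setX - range om"
    using om j0 triple_subset_setX notin_range_transversal[of om "ptB j0" j0] by auto
  moreover have "ptB j0 \<notin> setA \<union> setC"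
    by (auto simp: setA_def setC_def)
  ultimately show "setX - range om \<noteq> setA \<union> setC"
    by blast
qed simp

lemma convex_sum_on_support:
  fixes y :: "'i \<Rightarrow> 'a::real_vector"
  assumes "finite I" "convex C" "sum w I = 1" "\<And>i. i \<in> I \<Longrightarrow> 0 \<le> w i"
    and "\<And>i. i \<in> I \<Longrightarrow> w i \<noteq> 0 \<Longrightarrow> y i \<in> C"
  shows "(\<Sum>i\<in>I. w i *\<^sub>R y i) \<in> C"
proof -
  let ?J = "{i \<in> I. w i \<noteq> 0}"
  have "sum w ?J = sum w I" "(\<Sum>i\<in>?J. w i *\<^sub>R y i) = (\<Sum>i\<in>I. w i *\<^sub>R y i)"
    using assms(1) by (auto intro: sum.mono_neutral_left)
  moreover have "(\<Sum>i\<in>?J. w i *\<^sub>R y i) \<in> C"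
    using assms calculation(1) by (intro convex_sum) auto
  ultimately show ?thesis
    by simp
qed

lemma sum_triple_in_convex_hull:
  fixes P Q R :: "'n::finite \<Rightarrow> 'a::real_vector"
  assumes "\<And>j. 0 \<le> a j" "\<And>j. 0 \<le> b j" "\<And>j. 0 \<le> c j" "(\<Sum>j\<in>UNIV. a j + b j + c j) = 1"
    and "\<And>j. a j \<noteq> 0 \<Longrightarrow> P j \<in> S" "\<And>j. b j \<noteq> 0 \<Longrightarrow> Q j \<in> S"
      "\<And>j. c j \<noteq> 0 \<Longrightarrow> R j \<in> S"
  shows "(\<Sum>j\<in>UNIV. a j *\<^sub>R P j + b j *\<^sub>R Q j + c j *\<^sub>R R j) \<in> convex hull S"
proof -
  let ?w = "case_sum a (case_sum b c)" and ?y = "case_sum P (case_sum Q R)"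
  have sum_Plus3: "(\<Sum>i\<in>UNIV. f i) = (\<Sum>j\<in>UNIV. f (Inl j) + f (Inr (Inl j)) + f (Inr (Inr j)))"
    for f :: "'n + 'n + 'n \<Rightarrow> 'b::comm_monoid_add"
    by (simp flip: UNIV_Plus_UNIV add: sum.Plus sum.distrib add.assoc)
  have "(\<Sum>i\<in>UNIV. ?w i *\<^sub>R ?y i) \<in> convex hull S"
    using assms by (intro convex_sum_on_support)
      (auto simp: sum_Plus3 intro: hull_inc split: sum.split)
  then show ?thesis
    by (simp add: sum_Plus3)
qed

(* The common i-th coordinate of both halves of sum_j t_j B_j. *)
definition B_coord :: "('n::finite \<Rightarrow> real) \<Rightarrow> 'n \<Rightarrow> real" where
  "B_coord t i = (2 * sum t UNIV - t i) / (2 * (2 * real CARD('n) - 1))"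

lemma sum_B_coord: "sum (B_coord t) UNIV = sum t UNIV / 2"
  for t :: "'n::finite \<Rightarrow> real"
proof -
  have "(\<Sum>i\<in>UNIV. 2 * sum t UNIV - t i) = (2 * real CARD('n) - 1) * sum t UNIV"
    by (simp add: sum_subtractf algebra_simps)
  then show ?thesis
    using two_card_minus_one_pos[where 'n='n]
    by (simp add: B_coord_def field_simps flip: sum_divide_distrib)
qed

lemma sum_scaled_triples:
  "(\<Sum>j\<in>UNIV. a j *\<^sub>R ptA j + t j *\<^sub>R ptB j + c j *\<^sub>R ptC j)
     = ((\<chi> i. a i + B_coord t i), (\<chi> i. c i + B_coord t i) :: real^'n::finite)"
proof -
  have "(\<Sum>j\<in>UNIV. t j * ((if i = j then 1 else 2) / D)) = (2 * sum t UNIV - t i) / D"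
    for i :: 'n and D :: real
  proof -
    have "(\<Sum>j\<in>UNIV. t j * (if i = j then 1 else 2))
        = (\<Sum>j\<in>UNIV. 2 * t j - (if i = j then t j else 0))"
      by (rule sum.cong) auto
    then show ?thesis
      by (simp add: sum_subtractf sum_distrib_left flip: sum_divide_distrib)
  qed
  then show ?thesis
    by (simp add: prod_eq_iff vec_eq_iff fst_sum snd_sum sum_component sum.distrib
        B_coord_def if_distrib cong: if_cong)
qed

lemma exists_balancing_level:
  fixes d :: "'a::finite \<Rightarrow> real"
  assumes d: "\<And>j. 0 \<le> d j" and r: "0 \<le> r"
  obtains T j0 where "r * d j0 \<le> T" "(\<Sum>j\<in>UNIV. max 0 (2 * (T - r * d j))) = T"
proof -
  define j0 where "j0 = arg_min_on d UNIV"
  have min: "d j0 \<le> d j" for j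
    unfolding j0_def by (rule arg_min_least) auto
  define g where "g T = (\<Sum>j\<in>UNIV. max 0 (2 * (T - r * d j))) - T" for T
  define e where "e = r * d j0"
  define b where "b = e + 2 * r * sum d UNIV"
  have "0 \<le> e" "e \<le> b"
    using d r by (simp_all add: e_def b_def sum_nonneg)
  have "r * d j0 \<le> r * d j" for j
    using min r by (rule mult_left_mono)
  then have "g e = - e"
    by (simp add: g_def e_def)
  then have "g e \<le> 0"
    using \<open>0 \<le> e\<close> by simp
  have "1 \<le> real CARD('a)"
    by (simp add: Suc_le_eq)
  then have "2 * b \<le> 2 * real CARD('a) * b"
    using \<open>0 \<le> e\<close> \<open>e \<le> b\<close> mult_right_mono[of 1 "real CARD('a)" b] by simp
  also have "\<dots> - 2 * r * sum d UNIV = (\<Sum>j\<in>UNIV. 2 * (b - r * d j))"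
    by (simp add: sum_subtractf sum_distrib_left sum_distrib_right algebra_simps)
  also have "\<dots> \<le> (\<Sum>j\<in>UNIV. max 0 (2 * (b - r * d j)))"
    by (rule sum_mono) simp
  finally have "0 \<le> g b"
    using \<open>0 \<le> e\<close> by (simp add: g_def b_def)
  moreover have "continuous_on {e..b} g"
    unfolding g_def by (intro continuous_intros)
  ultimately obtain T where "e \<le> T" "g T = 0"
    using IVT'[of g e 0 b] \<open>g e \<le> 0\<close> \<open>e \<le> b\<close> by blast
  then show ?thesis
    using that[of j0 T] by (simp add: g_def e_def)
qed

lemma water_filling:
  fixes a c :: "'n::finite \<Rightarrow> real"
  assumes a: "\<And>i. 0 \<le> a i" and c: "\<And>i. 0 \<le> c i" and total: "sum a UNIV + sum c UNIV = 1"
  obtains \<alpha> t \<gamma> j0 where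
    "\<And>j. 0 \<le> \<alpha> j" "\<And>j. 0 \<le> t j" "\<And>j. 0 \<le> \<gamma> j" "(\<Sum>j\<in>UNIV. \<alpha> j + t j + \<gamma> j) = 1"
    "\<And>i. a i = \<alpha> i + B_coord t i" "\<And>i. c i = \<gamma> i + B_coord t i"
    "\<And>j. \<alpha> j = 0 \<or> t j = 0 \<or> \<gamma> j = 0" "\<alpha> j0 = 0 \<or> \<gamma> j0 = 0"
proof -
  define n where "n = 2 * real CARD('n) - 1"
  have "0 < n"
    using two_card_minus_one_pos by (simp add: n_def)
  define d where "d i = min (a i) (c i)" for i
  have d_nonneg: "0 \<le> d i" for i
    using a c by (simp add: d_def)
  obtain T j0 where j0: "n * d j0 \<le> T" and level: "(\<Sum>j\<in>UNIV. max 0 (2 * (T - n * d j))) = T"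
    by (rule exists_balancing_level[of d n]) (use d_nonneg \<open>0 < n\<close> in auto)
  define t where "t j = max 0 (2 * (T - n * d j))" for j
  have t_sum: "sum t UNIV = T"
    using level by (simp add: t_def)
  have B_coord_t: "B_coord t j = (if n * d j \<le> T then d j else T / n)" for j
    using \<open>0 < n\<close> by (simp add: B_coord_def t_sum flip: n_def) (simp add: t_def field_simps)
  have B_le_d: "B_coord t j \<le> d j" for j
    using \<open>0 < n\<close> by (simp add: B_coord_t pos_divide_le_eq mult.commute)
  have t_or_B: "t j = 0 \<or> B_coord t j = d j" for j
    by (simp add: B_coord_t t_def)
  define \<alpha> where "\<alpha> i = a i - B_coord t i" for i
  define \<gamma> where "\<gamma> i = c i - B_coord t i" for i
  show ?thesis
  proof (rule that[of \<alpha> t \<gamma> j0])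
    show "0 \<le> \<alpha> j" "0 \<le> \<gamma> j" for j
      using B_le_d[of j] by (simp_all add: \<alpha>_def \<gamma>_def d_def)
    show "0 \<le> t j" for j
      by (simp add: t_def)
    show "(\<Sum>j\<in>UNIV. \<alpha> j + t j + \<gamma> j) = 1"
      using total
      by (simp add: \<alpha>_def \<gamma>_def sum.distrib sum_subtractf sum_B_coord flip: sum_distrib_left)
    show "a i = \<alpha> i + B_coord t i" "c i = \<gamma> i + B_coord t i" for i
      by (simp_all add: \<alpha>_def \<gamma>_def)
    show "\<alpha> j = 0 \<or> t j = 0 \<or> \<gamma> j = 0" for j
      using t_or_B[of j] by (auto simp: \<alpha>_def \<gamma>_def d_def)
    show "\<alpha> j0 = 0 \<or> \<gamma> j0 = 0"
      using j0 by (auto simp: \<alpha>_def \<gamma>_def d_def B_coord_t)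
  qed
qed

definition std_simplex :: "((real^'n::finite) \<times> (real^'n)) set" where
  "std_simplex = {p. (\<forall>i. 0 \<le> fst p $ i \<and> 0 \<le> snd p $ i)
                     \<and> (\<Sum>i\<in>UNIV. fst p $ i + snd p $ i) = 1}"

lemma convex_std_simplex: "convex std_simplex"
proof (rule convexI)
  fix p q :: "(real^'n::finite) \<times> (real^'n)" and u v :: real
  assume "p \<in> std_simplex" "q \<in> std_simplex" "0 \<le> u" "0 \<le> v" "u + v = 1"
  moreover have "(\<Sum>i\<in>UNIV. fst (u *\<^sub>R p + v *\<^sub>R q) $ i + snd (u *\<^sub>R p + v *\<^sub>R q) $ i)
      = u * (\<Sum>i\<in>UNIV. fst p $ i + snd p $ i) + v * (\<Sum>i\<in>UNIV. fst q $ i + snd q $ i)"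
    by (simp add: sum.distrib sum_distrib_left algebra_simps)
  ultimately show "u *\<^sub>R p + v *\<^sub>R q \<in> std_simplex"
    by (simp add: std_simplex_def)
qed

lemma convex_hull_AC_eq_std_simplex: "convex hull (setA \<union> setC) = std_simplex"
proof
  show "convex hull (setA \<union> setC) \<subseteq> std_simplex"
  proof (rule hull_minimal)
    show "setA \<union> setC \<subseteq> std_simplex"
      by (auto simp: setA_def setC_def std_simplex_def sum.distrib)
  qed (rule convex_std_simplex)
  show "std_simplex \<subseteq> convex hull (setA \<union> setC)"
  proof
    fix p :: "(real^'n) \<times> (real^'n)"
    assume "p \<in> std_simplex"
    then have "(\<Sum>j\<in>UNIV. (fst p $ j) *\<^sub>R ptA j + 0 *\<^sub>R ptB j + (snd p $ j) *\<^sub>R ptC j)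
        \<in> convex hull (setA \<union> setC)"
      by (intro sum_triple_in_convex_hull) (auto simp: std_simplex_def setA_def setC_def)
    then show "p \<in> convex hull (setA \<union> setC)"
      by (simp only: sum_scaled_triples) (simp add: B_coord_def)
  qed
qed

lemma ptB_in_std_simplex: "ptB j \<in> std_simplex"
  for j :: "'n::finite"
proof -
  have "(\<Sum>i\<in>UNIV. if i = j then 1 else 2) = (\<Sum>i\<in>UNIV. 2 - (if i = j then 1 else 0 :: real))"
    by (rule sum.cong) auto
  also have "\<dots> = 2 * real CARD('n) - 1"
    by (simp add: sum_subtractf)
  finally have "(\<Sum>i\<in>UNIV. fst (ptB j :: (real^'n) \<times> (real^'n)) $ i) = 1 / 2"
    using two_card_minus_one_pos[where 'n='n] by (simp flip: sum_divide_distrib)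
  then show ?thesis
    using two_card_minus_one_pos[where 'n='n] by (simp add: std_simplex_def sum.distrib)
qed

lemma setX_subset_convex_hull_AC: "setX \<subseteq> convex hull (setA \<union> setC)"
  using ptB_in_std_simplex
  by (auto simp: setX_def setB_def convex_hull_AC_eq_std_simplex[symmetric] intro: hull_inc)

lemma std_simplex_covered_by_good_simplices:
  assumes "p \<in> std_simplex"
  obtains S where "good_set S" "p \<in> convex hull S"
proof -
  obtain \<alpha> t \<gamma> j0 where weights:
    "\<And>j. 0 \<le> \<alpha> j" "\<And>j. 0 \<le> t j" "\<And>j. 0 \<le> \<gamma> j" "(\<Sum>j\<in>UNIV. \<alpha> j + t j + \<gamma> j) = 1"
    and coords: "\<And>i. fst p $ i = \<alpha> i + B_coord t i" "\<And>i. snd p $ i = \<gamma> i + B_coord t i"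
    and zero: "\<And>j. \<alpha> j = 0 \<or> t j = 0 \<or> \<gamma> j = 0" and j0: "\<alpha> j0 = 0 \<or> \<gamma> j0 = 0"
    by (rule water_filling[of "\<lambda>i. fst p $ i" "\<lambda>i. snd p $ i"])
      (use assms in \<open>auto simp: std_simplex_def sum.distrib\<close>)
  define om where "om j = (if \<alpha> j = 0 then ptA j else if \<gamma> j = 0 then ptC j else ptB j)" for j
  have om: "om j \<in> {ptA j, ptB j, ptC j}" for j
    by (simp add: om_def)
  define S where "S = setX - range om"
  have good: "good_set S"
    unfolding S_def using j0 by (intro good_set_Diff_transversal[of om j0]) (auto simp: om_def)
  have kept: "x \<in> S" if "x \<in> {ptA j, ptB j, ptC j}" "x \<noteq> om j" for x j
    using that om triple_subset_setX notin_range_transversal[of om x j] by (auto simp: S_def)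
  have "\<alpha> j \<noteq> 0 \<Longrightarrow> ptA j \<in> S" "t j \<noteq> 0 \<Longrightarrow> ptB j \<in> S" "\<gamma> j \<noteq> 0 \<Longrightarrow> ptC j \<in> S"
    for j
    using zero[of j] by (auto intro!: kept[of _ j] simp: om_def split: if_splits)
  have "p = (\<Sum>j\<in>UNIV. \<alpha> j *\<^sub>R ptA j + t j *\<^sub>R ptB j + \<gamma> j *\<^sub>R ptC j)"
    by (simp add: sum_scaled_triples prod_eq_iff vec_eq_iff coords)
  also have "\<dots> \<in> convex hull S"
    by (intro sum_triple_in_convex_hull weights) fact+
  finally show ?thesis
    using that good by blast
qed

theorem mainTheorem8:
  assumes "CARD('n::finite) \<ge> 2"
  shows "convex hull (setA \<union> setC :: ((real^'n) \<times> (real^'n)) set)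
           = \<Union> {convex hull S | S :: ((real^'n) \<times> (real^'n)) set. good_set S}"
proof
  show "convex hull (setA \<union> setC)
      \<subseteq> \<Union> {convex hull S | S :: ((real^'n) \<times> (real^'n)) set. good_set S}"
    unfolding convex_hull_AC_eq_std_simplex by (blast elim: std_simplex_covered_by_good_simplices)
  have "convex hull S \<subseteq> convex hull (setA \<union> setC)" if "good_set S"
    for S :: "((real^'n) \<times> (real^'n)) set"
    using that setX_subset_convex_hull_AC by (intro hull_minimal) (auto simp: good_set_def)
  then show "\<Union> {convex hull S | S :: ((real^'n) \<times> (real^'n)) set. good_set S}
      \<subseteq> convex hull (setA \<union> setC)"
    by blast
qed

end
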